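(* Let $-\pi\le\mu_1,\mu_2<\pi$ and $0\le\rho_1,\rho_2<1$, and consider the probability density on $[-\pi,\pi)$ $$f(\theta)=C\left[\{1+\rho_1^2-2\rho_1\cos(\theta-\mu_1)\}\{1+\rho_2^2-2\rho_2\cos(\theta-\mu_2)\}\right]^{-1},$$ with $C>0$ the normalizing constant. Then $f$ is symmetric (about some point of the circle) if and only if $\rho_1=\rho_2$, or $\rho_j=0$ for some $j\in\{1,2\}$, or $\mu_1=\mu_2+(j-1)\pi$ for some $j\in\{1,2\}$ (angles taken modulo $2\pi$). *)

theory Defs
  imports "HOL-Analysis.Analysis"
begin

text \<open>Density of the product of two wrapped-Cauchy-type kernels (as a 2pi-periodic
  function on the real line; its restriction to [-pi,pi) is the density of the paper).\<close>
definition kernel_prod :: "real \<Rightarrow> real \<Rightarrow> real \<Rightarrow> real \<Rightarrow> real \<Rightarrow> real \<Rightarrow> real" where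
  "kernel_prod C \<mu>1 \<mu>2 \<rho>1 \<rho>2 \<theta> =
     C / ((1 + \<rho>1\<^sup>2 - 2 * \<rho>1 * cos (\<theta> - \<mu>1)) * (1 + \<rho>2\<^sup>2 - 2 * \<rho>2 * cos (\<theta> - \<mu>2)))"

definition circ_symmetric :: "(real \<Rightarrow> real) \<Rightarrow> bool" where
  "circ_symmetric f \<longleftrightarrow> (\<exists>\<nu>. \<forall>\<theta>. f (\<nu> + \<theta>) = f (\<nu> - \<theta>))"

end

theory Submission
  imports Defs
begin

text \<open>Write \<open>D(\<theta>)\<close> for the product of the two denominators and \<open>a\<^sub>j = \<mu>\<^sub>j - \<nu>\<close>.
  The defect \<open>D(\<nu>+t) - D(\<nu>-t)\<close> is a combination of \<open>sin t\<close> and \<open>sin t cos t\<close>, so symmetry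
  about \<open>\<nu>\<close> amounts to the two equations
  \<open>\<rho>\<^sub>1(1+\<rho>\<^sub>2\<^sup>2) sin a\<^sub>1 + \<rho>\<^sub>2(1+\<rho>\<^sub>1\<^sup>2) sin a\<^sub>2 = 0\<close> and \<open>\<rho>\<^sub>1\<rho>\<^sub>2 sin(a\<^sub>1+a\<^sub>2) = 0\<close>.
  If both \<open>\<rho>\<^sub>j\<close> are positive, the second gives \<open>sin a\<^sub>2 = \<mp>sin a\<^sub>1\<close>; then the first forces
  either \<open>sin a\<^sub>1 = sin a\<^sub>2 = 0\<close>, i.e. \<open>\<mu>\<^sub>1 \<equiv> \<mu>\<^sub>2 (mod \<pi>)\<close>, or
  \<open>\<rho>\<^sub>1(1+\<rho>\<^sub>2\<^sup>2) = \<rho>\<^sub>2(1+\<rho>\<^sub>1\<^sup>2)\<close>, i.e. \<open>(\<rho>\<^sub>1-\<rho>\<^sub>2)(1-\<rho>\<^sub>1\<rho>\<^sub>2) = 0\<close>.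
  Conversely each of the listed conditions lets one solve both equations for \<open>\<nu>\<close>.\<close>

definition wc_denom :: "real \<Rightarrow> real \<Rightarrow> real \<Rightarrow> real" where
  "wc_denom \<rho> \<mu> \<theta> = 1 + \<rho>\<^sup>2 - 2 * \<rho> * cos (\<theta> - \<mu>)"

definition symmetry_equations :: "real \<Rightarrow> real \<Rightarrow> real \<Rightarrow> real \<Rightarrow> bool" where
  "symmetry_equations \<rho>1 \<rho>2 a1 a2 \<longleftrightarrow>
     \<rho>1 * (1 + \<rho>2\<^sup>2) * sin a1 + \<rho>2 * (1 + \<rho>1\<^sup>2) * sin a2 = 0 \<and> \<rho>1 * \<rho>2 * sin (a1 + a2) = 0"

lemma kernel_prod_eq:
  "kernel_prod C \<mu>1 \<mu>2 \<rho>1 \<rho>2 \<theta> = C / (wc_denom \<rho>1 \<mu>1 \<theta> * wc_denom \<rho>2 \<mu>2 \<theta>)"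
  by (simp add: kernel_prod_def wc_denom_def)

lemma wc_denom_reflect:
  "wc_denom \<rho> \<mu> (\<nu> + t) = 1 + \<rho>\<^sup>2 - 2 * \<rho> * cos (t - (\<mu> - \<nu>))"
  "wc_denom \<rho> \<mu> (\<nu> - t) = 1 + \<rho>\<^sup>2 - 2 * \<rho> * cos (t + (\<mu> - \<nu>))"
proof -
  show "wc_denom \<rho> \<mu> (\<nu> + t) = 1 + \<rho>\<^sup>2 - 2 * \<rho> * cos (t - (\<mu> - \<nu>))"
    unfolding wc_denom_def by (simp add: algebra_simps)
  have "\<nu> - t - \<mu> = - (t + (\<mu> - \<nu>))" by simp
  then show "wc_denom \<rho> \<mu> (\<nu> - t) = 1 + \<rho>\<^sup>2 - 2 * \<rho> * cos (t + (\<mu> - \<nu>))"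
    unfolding wc_denom_def by (simp only: cos_minus)
qed

lemma wc_denom_prod_reflect_diff:
  "wc_denom \<rho>1 \<mu>1 (\<nu> + t) * wc_denom \<rho>2 \<mu>2 (\<nu> + t) - wc_denom \<rho>1 \<mu>1 (\<nu> - t) * wc_denom \<rho>2 \<mu>2 (\<nu> - t)
   = -4 * sin t * (\<rho>1 * (1 + \<rho>2\<^sup>2) * sin (\<mu>1 - \<nu>) + \<rho>2 * (1 + \<rho>1\<^sup>2) * sin (\<mu>2 - \<nu>)
                   - 2 * \<rho>1 * \<rho>2 * cos t * sin ((\<mu>1 - \<nu>) + (\<mu>2 - \<nu>)))"
proof -
  have "(1 + \<rho>1\<^sup>2 - 2 * \<rho>1 * cos (t - a1)) * (1 + \<rho>2\<^sup>2 - 2 * \<rho>2 * cos (t - a2))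
      - (1 + \<rho>1\<^sup>2 - 2 * \<rho>1 * cos (t + a1)) * (1 + \<rho>2\<^sup>2 - 2 * \<rho>2 * cos (t + a2))
      = -4 * sin t * (\<rho>1 * (1 + \<rho>2\<^sup>2) * sin a1 + \<rho>2 * (1 + \<rho>1\<^sup>2) * sin a2
                      - 2 * \<rho>1 * \<rho>2 * cos t * sin (a1 + a2))" for a1 a2
    by (simp add: cos_diff cos_add sin_add algebra_simps power2_eq_square)
  then show ?thesis
    unfolding wc_denom_reflect .
qed

lemma wc_denom_prod_symmetric_about_iff:
  "(\<forall>t. wc_denom \<rho>1 \<mu>1 (\<nu> + t) * wc_denom \<rho>2 \<mu>2 (\<nu> + t) = wc_denom \<rho>1 \<mu>1 (\<nu> - t) * wc_denom \<rho>2 \<mu>2 (\<nu> - t))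
   \<longleftrightarrow> symmetry_equations \<rho>1 \<rho>2 (\<mu>1 - \<nu>) (\<mu>2 - \<nu>)"
  (is "(\<forall>t. ?L t = ?R t) \<longleftrightarrow> _")
proof -
  define K where "K = \<rho>1 * (1 + \<rho>2\<^sup>2) * sin (\<mu>1 - \<nu>) + \<rho>2 * (1 + \<rho>1\<^sup>2) * sin (\<mu>2 - \<nu>)"
  define S where "S = sin ((\<mu>1 - \<nu>) + (\<mu>2 - \<nu>))"
  have defect: "?L t - ?R t = -4 * sin t * (K - 2 * \<rho>1 * \<rho>2 * cos t * S)" for t
    unfolding K_def S_def by (rule wc_denom_prod_reflect_diff)
  show ?thesis
  proof
    assume symmetric: "\<forall>t. ?L t = ?R t"
    have "K = 0"
      using defect[of "pi / 2"] symmetric by simp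
    moreover have "\<rho>1 * \<rho>2 * S = 0"
    proof -
      have "0 = -4 * sin (pi / 4) * (K - 2 * \<rho>1 * \<rho>2 * cos (pi / 4) * S)"
        using defect[of "pi / 4"] symmetric by simp
      also have "\<dots> = 8 * (sin (pi / 4) * cos (pi / 4)) * (\<rho>1 * \<rho>2 * S)"
        using \<open>K = 0\<close> by (simp add: algebra_simps)
      also have "\<dots> = 4 * (\<rho>1 * \<rho>2 * S)"
        by (simp add: sin_45 cos_45)
      finally show ?thesis by simp
    qed
    ultimately show "symmetry_equations \<rho>1 \<rho>2 (\<mu>1 - \<nu>) (\<mu>2 - \<nu>)"
      unfolding symmetry_equations_def K_def S_def by simp
  next
    assume "symmetry_equations \<rho>1 \<rho>2 (\<mu>1 - \<nu>) (\<mu>2 - \<nu>)"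
    then have "K = 0" "\<rho>1 * \<rho>2 * S = 0"
      unfolding symmetry_equations_def K_def S_def by simp_all
    then show "\<forall>t. ?L t = ?R t"
      using defect by auto
  qed
qed

lemma one_plus_square_cross_eq_imp_eq:
  fixes r1 r2 :: real
  assumes "r1 * (1 + r2\<^sup>2) = r2 * (1 + r1\<^sup>2)" "r1 * r2 \<noteq> 1"
  shows "r1 = r2"
proof -
  have "(r1 - r2) * (1 - r1 * r2) = 0"
    using assms(1) by (simp add: algebra_simps power2_eq_square)
  with assms(2) show ?thesis by simp
qed

lemma symmetry_equations_cases:
  fixes \<rho>1 \<rho>2 a1 a2 :: real
  assumes "0 \<le> \<rho>1" "0 \<le> \<rho>2" "\<rho>1 * \<rho>2 \<noteq> 1"
    and "symmetry_equations \<rho>1 \<rho>2 a1 a2"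
  shows "\<rho>1 = \<rho>2 \<or> \<rho>1 = 0 \<or> \<rho>2 = 0 \<or> (\<exists>m::int. a1 = a2 + of_int m * pi)"
proof (cases "\<rho>1 = 0 \<or> \<rho>2 = 0")
  case False
  then have pos: "\<rho>1 > 0" "\<rho>2 > 0" using assms(1,2) by auto
  have weighted: "\<rho>1 * (1 + \<rho>2\<^sup>2) * sin a1 + \<rho>2 * (1 + \<rho>1\<^sup>2) * sin a2 = 0"
    and "sin (a1 + a2) = 0"
    using assms(4) False unfolding symmetry_equations_def by auto
  define c where "c = cos (a1 + a2)"
  have "c\<^sup>2 = 1"
    using sin_cos_squared_add[of "a1 + a2"] \<open>sin (a1 + a2) = 0\<close> unfolding c_def by simp
  then have c_cases: "c = 1 \<or> c = -1" by (simp add: power2_eq_1_iff)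
  have "sin a2 = sin ((a1 + a2) - a1)" by simp
  also have "\<dots> = - c * sin a1"
    unfolding sin_diff c_def \<open>sin (a1 + a2) = 0\<close> by simp
  finally have sin_a2: "sin a2 = - c * sin a1" .
  have "sin a1 = 0 \<or> \<rho>1 = \<rho>2"
    using c_cases
  proof
    assume "c = 1"
    then have "(\<rho>1 * (1 + \<rho>2\<^sup>2) - \<rho>2 * (1 + \<rho>1\<^sup>2)) * sin a1 = 0"
      using weighted sin_a2 by (simp add: algebra_simps)
    then show ?thesis
      using one_plus_square_cross_eq_imp_eq[OF _ assms(3)] by auto
  next
    assume "c = -1"
    then have "(\<rho>1 * (1 + \<rho>2\<^sup>2) + \<rho>2 * (1 + \<rho>1\<^sup>2)) * sin a1 = 0"
      using weighted sin_a2 by (simp add: algebra_simps)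
    moreover have "\<rho>1 * (1 + \<rho>2\<^sup>2) + \<rho>2 * (1 + \<rho>1\<^sup>2) > 0"
      using pos by (simp add: add_pos_pos)
    ultimately show ?thesis by simp
  qed
  moreover have "\<exists>m::int. a1 = a2 + of_int m * pi" if "sin a1 = 0"
  proof -
    obtain i1 :: int where "a1 = of_int i1 * pi"
      using \<open>sin a1 = 0\<close> by (auto simp: sin_zero_iff_int2)
    moreover have "sin a2 = 0"
      using \<open>sin a1 = 0\<close> sin_a2 by simp
    then obtain i2 :: int where "a2 = of_int i2 * pi"
      by (auto simp: sin_zero_iff_int2)
    ultimately have "a1 = a2 + of_int (i1 - i2) * pi"
      by (simp add: algebra_simps)
    then show ?thesis ..
  qed
  ultimately show ?thesis by blast
qed auto

lemma ex_symmetry_equations_iff: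
  fixes \<rho>1 \<rho>2 \<mu>1 \<mu>2 :: real
  assumes "0 \<le> \<rho>1" "0 \<le> \<rho>2" "\<rho>1 * \<rho>2 \<noteq> 1"
  shows "(\<exists>\<nu>. symmetry_equations \<rho>1 \<rho>2 (\<mu>1 - \<nu>) (\<mu>2 - \<nu>))
         \<longleftrightarrow> \<rho>1 = \<rho>2 \<or> \<rho>1 = 0 \<or> \<rho>2 = 0 \<or> (\<exists>m::int. \<mu>1 = \<mu>2 + of_int m * pi)"
proof
  assume "\<exists>\<nu>. symmetry_equations \<rho>1 \<rho>2 (\<mu>1 - \<nu>) (\<mu>2 - \<nu>)"
  then obtain \<nu> where "symmetry_equations \<rho>1 \<rho>2 (\<mu>1 - \<nu>) (\<mu>2 - \<nu>)" ..
  from symmetry_equations_cases[OF assms this]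
  show "\<rho>1 = \<rho>2 \<or> \<rho>1 = 0 \<or> \<rho>2 = 0 \<or> (\<exists>m::int. \<mu>1 = \<mu>2 + of_int m * pi)"
    by auto
next
  assume "\<rho>1 = \<rho>2 \<or> \<rho>1 = 0 \<or> \<rho>2 = 0 \<or> (\<exists>m::int. \<mu>1 = \<mu>2 + of_int m * pi)"
  then consider "\<rho>1 = \<rho>2" | "\<rho>1 = 0" | "\<rho>2 = 0" | m :: int where "\<mu>1 = \<mu>2 + of_int m * pi"
    by blast
  then show "\<exists>\<nu>. symmetry_equations \<rho>1 \<rho>2 (\<mu>1 - \<nu>) (\<mu>2 - \<nu>)"
  proof cases
    case 1
    define \<nu> where "\<nu> = (\<mu>1 + \<mu>2) / 2"
    have opposite: "\<mu>1 - \<nu> = - (\<mu>2 - \<nu>)"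
      unfolding \<nu>_def by (simp add: field_simps)
    have "symmetry_equations \<rho>1 \<rho>2 (\<mu>1 - \<nu>) (\<mu>2 - \<nu>)"
      unfolding opposite 1 symmetry_equations_def sin_minus by simp
    then show ?thesis ..
  next
    case 2
    then have "symmetry_equations \<rho>1 \<rho>2 (\<mu>1 - \<mu>2) (\<mu>2 - \<mu>2)"
      by (simp add: symmetry_equations_def)
    then show ?thesis ..
  next
    case 3
    then have "symmetry_equations \<rho>1 \<rho>2 (\<mu>1 - \<mu>1) (\<mu>2 - \<mu>1)"
      by (simp add: symmetry_equations_def)
    then show ?thesis ..
  next
    case 4
    then have "symmetry_equations \<rho>1 \<rho>2 (\<mu>1 - \<mu>2) (\<mu>2 - \<mu>2)"
      by (simp add: symmetry_equations_def sin_zero_iff_int2)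
    then show ?thesis ..
  qed
qed

lemma circ_symmetric_kernel_prod_iff:
  assumes "C \<noteq> 0"
  shows "circ_symmetric (kernel_prod C \<mu>1 \<mu>2 \<rho>1 \<rho>2)
         \<longleftrightarrow> (\<exists>\<nu>. symmetry_equations \<rho>1 \<rho>2 (\<mu>1 - \<nu>) (\<mu>2 - \<nu>))"
  unfolding circ_symmetric_def kernel_prod_eq divide_cancel_left
  using assms by (simp add: wc_denom_prod_symmetric_about_iff)

lemma ex_int_multiple_pi_iff:
  fixes x y :: real
  shows "(\<exists>m::int. x = y + of_int m * pi)
         \<longleftrightarrow> (\<exists>j\<in>{1::nat,2}. \<exists>k::int. x = y + (real j - 1) * pi + 2 * pi * of_int k)"
proof
  assume "\<exists>m::int. x = y + of_int m * pi"
  then obtain m :: int where m: "x = y + of_int m * pi" ..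
  show "\<exists>j\<in>{1::nat,2}. \<exists>k::int. x = y + (real j - 1) * pi + 2 * pi * of_int k"
  proof (cases "even m")
    case True
    then obtain k where "m = 2 * k" ..
    then have "x = y + (real 1 - 1) * pi + 2 * pi * of_int k"
      using m by simp
    then show ?thesis by blast
  next
    case False
    then obtain k where "m = 2 * k + 1" using oddE by blast
    then have "x = y + (real 2 - 1) * pi + 2 * pi * of_int k"
      using m by (simp add: algebra_simps)
    then show ?thesis by blast
  qed
next
  assume "\<exists>j\<in>{1::nat,2}. \<exists>k::int. x = y + (real j - 1) * pi + 2 * pi * of_int k"
  then obtain j :: nat and k :: int where "x = y + (real j - 1) * pi + 2 * pi * of_int k"
    by blast
  then have "x = y + of_int (int j - 1 + 2 * k) * pi"
    by (simp add: algebra_simps)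
  then show "\<exists>m::int. x = y + of_int m * pi" ..
qed

theorem theorem3:
  fixes \<mu>1 \<mu>2 \<rho>1 \<rho>2 C :: real
  assumes "-pi \<le> \<mu>1" "\<mu>1 < pi" "-pi \<le> \<mu>2" "\<mu>2 < pi"
    and "0 \<le> \<rho>1" "\<rho>1 < 1" "0 \<le> \<rho>2" "\<rho>2 < 1"
    and "C > 0"
    and "(kernel_prod C \<mu>1 \<mu>2 \<rho>1 \<rho>2 has_integral 1) {-pi..pi}"
  shows "circ_symmetric (kernel_prod C \<mu>1 \<mu>2 \<rho>1 \<rho>2) \<longleftrightarrow>
           (\<rho>1 = \<rho>2 \<or> (\<exists>j\<in>{1::nat,2}. (if j = 1 then \<rho>1 else \<rho>2) = 0)
            \<or> (\<exists>j\<in>{1::nat,2}. \<exists>k::int. \<mu>1 = \<mu>2 + (real j - 1) * pi + 2 * pi * real_of_int k))"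
proof -
  have "\<rho>1 * \<rho>2 \<le> \<rho>1"
    using mult_left_le[of \<rho>2 \<rho>1] assms(5,8) by simp
  then have "\<rho>1 * \<rho>2 \<noteq> 1"
    using assms(6) by linarith
  have "C \<noteq> 0"
    using assms(9) by simp
  show ?thesis
    unfolding circ_symmetric_kernel_prod_iff[OF \<open>C \<noteq> 0\<close>]
      ex_symmetry_equations_iff[OF assms(5,7) \<open>\<rho>1 * \<rho>2 \<noteq> 1\<close>]
      ex_int_multiple_pi_iff
    by auto
qed

end
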